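(* Let $n \ge 2$ be an integer and let $A_n \in \{0,1\}^{[2]^n \times [2]^{n-1}}$ be the binary single-deletion channel, i.e. $(A_n)_{x,y} = 1$ if and only if $y$ can be obtained from $x$ by deleting exactly one symbol. For a binary string $y$ let $r_y$ be the number of runs of $y$, $u_y$ the number of runs of length one in $y$, and $b_y$ the number of runs of length one that occur at the start or at the end of $y$. Define \[ f(r,u,b) = \frac{1}{r}\left(1 + \frac{\max(2u - b - 2,\,0)}{(r+2)(r+1)}\right)^{-1}. \] Then the vector $z \in \mathbb{R}^{[2]^{n-1}}$ with $z_y = f(r_y,u_y,b_y)$ is feasible for $\kappa^*(A_n)$, i.e. $z \ge \mathbf{0}$ and $A_n z \ge \mathbf{1}$ entrywise; consequently $\kappa^*(A_n) \le \sum_{y \in [2]^{n-1}} z_y$.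
   Context: $[2]=\{0,1\}$ and $[2]^m$ is the set of binary strings of length $m$. A run of a string is a maximal block of consecutive equal symbols. For a $0/1$ matrix $A \in \{0,1\}^{X\times Y}$ (a combinatorial channel with inputs $X$ and outputs $Y$), the minimum fractional output covering number is $\kappa^*(A) = \min\{\mathbf{1}^T z : z \in \mathbb{R}^Y,\ z \ge \mathbf{0},\ Az \ge \mathbf{1}\}$, where inequalities are entrywise and $\mathbf{1},\mathbf{0}$ denote all-ones and all-zeros vectors. *)

theory Defs
  imports Complex_Main
begin

text \<open>Binary strings are lists over bool (bool plays the role of the alphabet [2] = {0,1}).\<close>

definition bin_strings :: "nat \<Rightarrow> bool list set" where
  "bin_strings m = {xs. length xs = m}"

definition one_deletion :: "'a list \<Rightarrow> 'a list \<Rightarrow> bool" where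
  "one_deletion x y \<longleftrightarrow> (\<exists>i < length x. y = take i x @ drop (Suc i) x)"

definition del_channel :: "bool list \<Rightarrow> bool list \<Rightarrow> real" where
  "del_channel x y = (if one_deletion x y then 1 else 0)"

fun runs :: "'a list \<Rightarrow> 'a list list" where
  "runs [] = []"
| "runs (x # xs) = (case runs xs of
       [] \<Rightarrow> [[x]]
     | r # rs \<Rightarrow> (if hd r = x then (x # r) # rs else [x] # r # rs))"

definition num_runs :: "'a list \<Rightarrow> nat" where
  "num_runs y = length (runs y)"

definition num_unit_runs :: "'a list \<Rightarrow> nat" where
  "num_unit_runs y = length (filter (\<lambda>r. length r = 1) (runs y))"

text \<open>Number of runs of length one among the first and the last run (a run counted once).\<close>
definition num_boundary_unit_runs :: "'a list \<Rightarrow> nat" where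
  "num_boundary_unit_runs y =
     card {i. i < length (runs y) \<and> (i = 0 \<or> i = length (runs y) - 1) \<and> length (runs y ! i) = 1}"

definition fweight :: "nat \<Rightarrow> nat \<Rightarrow> nat \<Rightarrow> real" where
  "fweight r u b = (1 / real r) *
     inverse (1 + max (2 * real u - real b - 2) 0 / ((real r + 2) * (real r + 1)))"

definition frac_cover_feasible :: "'x set \<Rightarrow> 'y set \<Rightarrow> ('x \<Rightarrow> 'y \<Rightarrow> real) \<Rightarrow> ('y \<Rightarrow> real) \<Rightarrow> bool" where
  "frac_cover_feasible X Y A z \<longleftrightarrow>
     (\<forall>y\<in>Y. z y \<ge> 0) \<and> (\<forall>x\<in>X. (\<Sum>y\<in>Y. A x y * z y) \<ge> 1)"

definition kappa_star :: "'x set \<Rightarrow> 'y set \<Rightarrow> ('x \<Rightarrow> 'y \<Rightarrow> real) \<Rightarrow> real" where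
  "kappa_star X Y A = Inf {(\<Sum>y\<in>Y. z y) | z. frac_cover_feasible X Y A z}"

end

theory Submission
  imports Defs
begin

text \<open>
  Let x have r runs, u of length one, b of those at either end, and put c = 2u - b and
  P = (r + 2)(r + 1).  Write f_k(M) = 1 / (k (1 + max M 0 / ((k + 2)(k + 1)))), so that an output
  with k runs has weight f_k(2u' - b' - 2).  Deleting one symbol from each run of x gives r distinct
  outputs.  Shortening a run of length at least two keeps r runs and creates at most one new unit
  run, so that output has weight at least f_r(c).  Deleting a unit run at either end leaves r - 1
  runs, and deleting an interior unit run merges its two neighbours and leaves r - 2 runs; in both
  cases a unit run is lost, so the weight is at least f_(r-1)(c), resp. f_(r-2)(c).
  For 0 <= c <= 2r one has f_(r-j)(c) >= f_r(c) + j / (P + c) for j = 1, 2, so each deletion earns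
  a credit of 0, 1 or 2 times 1 / (P + c) on top of f_r(c).  The credits add up to 2u - b = c,
  and r f_r(c) + c / (P + c) = 1.
\<close>

section \<open>The weight function\<close>

definition weight :: "nat \<Rightarrow> real \<Rightarrow> real" where
  "weight r M = 1 / real r * inverse (1 + max M 0 / ((real r + 2) * (real r + 1)))"

lemma fweight_eq_weight: "fweight r u b = weight r (2 * real u - real b - 2)"
  by (simp add: fweight_def weight_def)

lemma weight_nonneg: "0 \<le> weight r M"
  unfolding weight_def by (simp add: add_nonneg_nonneg)

lemma weight_antimono:
  assumes "M \<le> M'"
  shows "weight r M' \<le> weight r M"
proof -
  have "max M 0 / ((real r + 2) * (real r + 1)) \<le> max M' 0 / ((real r + 2) * (real r + 1))"
    using assms by (intro divide_right_mono) auto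
  then show ?thesis
    unfolding weight_def by (intro mult_left_mono le_imp_inverse_le) (auto intro: add_pos_nonneg)
qed

lemma weight_eq:
  assumes "0 \<le> M"
  shows "weight r M = (real r + 2) * (real r + 1) / (real r * ((real r + 2) * (real r + 1) + M))"
proof -
  define P where "P = (real r + 2) * (real r + 1)"
  have "0 < P" by (simp add: P_def)
  then have "1 + M / P = (P + M) / P" by (simp add: field_simps)
  then show ?thesis using assms by (simp add: weight_def P_def[symmetric])
qed

lemma weight_complement:
  assumes "0 < r" "0 \<le> c"
  shows "real r * weight r c + c / ((real r + 2) * (real r + 1) + c) = 1"
proof -
  define P where "P = (real r + 2) * (real r + 1)"
  have "0 < P + c" using assms by (simp add: P_def add_pos_nonneg)
  have "real r * weight r c = P / (P + c)" using assms by (simp add: weight_eq P_def)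
  then show ?thesis using \<open>0 < P + c\<close> by (simp add: P_def[symmetric] add_divide_distrib[symmetric])
qed

lemma divide_le_divide_cross:
  fixes a b c d :: real
  assumes "0 < b" "0 < d" "a * d \<le> c * b"
  shows "a / b \<le> c / d"
  using assms by (simp add: divide_le_eq le_divide_eq ac_simps)

lemma weight_le_weight_pred:
  assumes r: "2 \<le> r" and c: "0 \<le> c" "c \<le> 2 * real r"
  shows "weight r c + 1 / ((real r + 2) * (real r + 1) + c) \<le> weight (r - 1) c"
proof -
  define s where "s = real r"
  have s: "2 \<le> s" "real (r - 1) = s - 1" using r by (auto simp: s_def of_nat_diff)
  have "2 * 1 \<le> s * (s - 1)" using s by (intro mult_mono) auto
  then have h: "c * (s * (s - 1) - 1) \<le> 2 * s * (s * (s - 1) - 1)"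
    using c s by (intro mult_right_mono) (auto simp: s_def)
  \<comment> \<open>after cross-multiplying, the difference decreases linearly in c: c = 2r is the worst case\<close>
  have "0 \<le> 10 * s^2 + 6 * s" using s by simp
  also have "\<dots> = 4 * s^3 + 6 * s^2 + 2 * s - 2 * (2 * s * (s * (s - 1) - 1))" by algebra
  also have "\<dots> \<le> 4 * s^3 + 6 * s^2 + 2 * s - 2 * (c * (s * (s - 1) - 1))" using h by simp
  also have "\<dots> = (s + 1) * s * (s * ((s + 2) * (s + 1) + c))
                  - ((s + 2) * (s + 1) + s) * ((s - 1) * ((s + 1) * s + c))" by algebra
  finally have "((s + 2) * (s + 1) + s) / (s * ((s + 2) * (s + 1) + c))
                  \<le> (s + 1) * s / ((s - 1) * ((s + 1) * s + c))"
    using s c by (intro divide_le_divide_cross) (auto intro!: mult_pos_pos add_pos_nonneg)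
  moreover have "weight r c + 1 / ((s + 2) * (s + 1) + c)
                   = ((s + 2) * (s + 1) + s) / (s * ((s + 2) * (s + 1) + c))"
  proof -
    have "s \<noteq> 0" using s by simp
    then have "(P + s) / (s * D) = P / (s * D) + 1 / D" for P D :: real
      by (simp add: add_divide_distrib)
    then show ?thesis using c by (simp add: weight_eq s_def[symmetric])
  qed
  moreover have "weight (r - 1) c = (s + 1) * s / ((s - 1) * ((s + 1) * s + c))"
    using weight_eq[OF c(1), of "r - 1"] unfolding s(2) by (simp add: add.commute)
  ultimately show ?thesis by (simp add: s_def)
qed

lemma weight_le_weight_pred2:
  assumes r: "3 \<le> r" and c: "0 \<le> c" "c \<le> 2 * real r"
  shows "weight r c + 2 / ((real r + 2) * (real r + 1) + c) \<le> weight (r - 2) c"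
proof -
  define s where "s = real r"
  have s: "3 \<le> s" "real (r - 2) = s - 2" using r by (auto simp: s_def of_nat_diff)
  have "3 * 1 \<le> s * (s - 2)" using s by (intro mult_mono) auto
  then have h: "c * (s * (s - 2) - 1) \<le> 2 * s * (s * (s - 2) - 1)"
    using c s by (intro mult_right_mono) (auto simp: s_def)
  have "0 \<le> 2 * s^3 + 10 * s^2 + 4 * s" using s by simp
  also have "\<dots> = 10 * s^3 - 6 * s^2 - 4 * s - 4 * (2 * s * (s * (s - 2) - 1))" by algebra
  also have "\<dots> \<le> 10 * s^3 - 6 * s^2 - 4 * s - 4 * (c * (s * (s - 2) - 1))" using h by simp
  also have "\<dots> = s * (s - 1) * (s * ((s + 2) * (s + 1) + c))
                  - ((s + 2) * (s + 1) + 2 * s) * ((s - 2) * (s * (s - 1) + c))" by algebra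
  finally have "((s + 2) * (s + 1) + 2 * s) / (s * ((s + 2) * (s + 1) + c))
                  \<le> s * (s - 1) / ((s - 2) * (s * (s - 1) + c))"
    using s c by (intro divide_le_divide_cross) (auto intro!: mult_pos_pos add_pos_nonneg)
  moreover have "weight r c + 2 / ((s + 2) * (s + 1) + c)
                   = ((s + 2) * (s + 1) + 2 * s) / (s * ((s + 2) * (s + 1) + c))"
  proof -
    have "s \<noteq> 0" using s by simp
    then have "(P + 2 * s) / (s * D) = P / (s * D) + 2 / D" for P D :: real
      by (simp add: add_divide_distrib)
    then show ?thesis using c by (simp add: weight_eq s_def[symmetric])
  qed
  moreover have "weight (r - 2) c = s * (s - 1) / ((s - 2) * (s * (s - 1) + c))"
    using weight_eq[OF c(1), of "r - 2"] unfolding s(2) by (simp add: algebra_simps)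
  ultimately show ?thesis by (simp add: s_def)
qed

section \<open>Run decompositions\<close>

definition is_run :: "'a list \<Rightarrow> bool" where
  "is_run r \<longleftrightarrow> r \<noteq> [] \<and> (\<forall>a\<in>set r. a = hd r)"

definition valid_runs :: "'a list list \<Rightarrow> bool" where
  "valid_runs R \<longleftrightarrow> (\<forall>r\<in>set R. is_run r) \<and> successively (\<noteq>) (map hd R)"

lemma is_run_append:
  assumes "is_run r" "is_run s" "hd r = hd s"
  shows "is_run (r @ s)"
  unfolding is_run_def
proof (intro conjI ballI)
  show "r @ s \<noteq> []" using assms(1) by (simp add: is_run_def)
  fix a assume "a \<in> set (r @ s)"
  then have "a = hd r \<or> a = hd s" using assms(1,2) by (auto simp: is_run_def)
  moreover have "hd (r @ s) = hd r" using assms(1) by (simp add: is_run_def)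
  ultimately show "a = hd (r @ s)" using assms(3) by argo
qed

lemma is_run_tl:
  assumes "is_run r" "length r \<noteq> 1"
  shows "is_run (tl r) \<and> hd (tl r) = hd r"
  using assms by (cases r) (auto simp: is_run_def neq_Nil_conv)

lemma runs_append_run:
  assumes "is_run r" "runs ys = [] \<or> hd (hd (runs ys)) \<noteq> hd r"
  shows "runs (r @ ys) = r # runs ys"
  using assms
proof (induction r)
  case Nil
  then show ?case by (simp add: is_run_def)
next
  case (Cons a r)
  show ?case
  proof (cases "r = []")
    case True
    with Cons.prems show ?thesis by (auto split: list.split)
  next
    case False
    then obtain b r' where "r = b # r'" by (cases r) auto
    with Cons.prems(1) have "is_run r" "hd r = a" by (auto simp: is_run_def)
    with Cons.IH Cons.prems(2) show ?thesis by simp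
  qed
qed

lemma runs_correct: "valid_runs (runs xs) \<and> concat (runs xs) = xs"
proof (induction xs)
  case Nil
  then show ?case by (simp add: valid_runs_def)
next
  case (Cons a xs)
  then show ?case
    by (cases "runs xs") (auto simp: valid_runs_def is_run_def successively_Cons)
qed

lemma runs_concat: "valid_runs R \<Longrightarrow> runs (concat R) = R"
proof (induction R)
  case Nil
  then show ?case by simp
next
  case (Cons r R)
  then have "valid_runs R" "is_run r" "R = [] \<or> hd (hd R) \<noteq> hd r"
    by (auto simp: valid_runs_def successively_Cons neq_Nil_conv)
  with Cons.IH show ?case by (simp add: runs_append_run)
qed

lemma valid_runs_take: "valid_runs R \<Longrightarrow> valid_runs (take k R)"
  and valid_runs_drop: "valid_runs R \<Longrightarrow> valid_runs (drop k R)"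
proof -
  assume "valid_runs R"
  then have "successively (\<noteq>) (map hd (take k R) @ map hd (drop k R))"
    by (simp add: valid_runs_def flip: map_append)
  with \<open>valid_runs R\<close> show "valid_runs (take k R)" "valid_runs (drop k R)"
    by (auto simp: valid_runs_def successively_append_iff dest: in_set_takeD in_set_dropD)
qed

lemma valid_runs_update:
  assumes "valid_runs R" "i < length R" "is_run t" "hd t = hd (R ! i)"
  shows "valid_runs (R[i := t])"
proof -
  have "map hd (R[i := t]) = map hd R"
    using assms(2,4) list_update_id[of "map hd R" i] by (simp add: map_update)
  with assms show ?thesis
    by (auto simp: valid_runs_def dest: set_update_subset_insert[THEN subsetD])
qed

lemma successively_neq_drop_two:
  fixes xs ys :: "bool list"
  assumes "successively (\<noteq>) (xs @ a # b # ys)"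
  shows "successively (\<noteq>) (xs @ ys)"
  using assms by (cases ys) (auto simp: successively_append_iff successively_Cons)

lemma concat_update_tl:
  assumes "i < length R" "R ! i \<noteq> []"
  shows "concat (R[i := tl (R ! i)])
           = take (length (concat (take i R))) (concat R)
             @ drop (Suc (length (concat (take i R)))) (concat R)"
proof -
  have "concat R = concat (take i R) @ R ! i @ concat (drop (Suc i) R)"
    using arg_cong[OF id_take_nth_drop[OF assms(1)], of concat] by simp
  with assms show ?thesis by (cases "R ! i") (simp_all add: upd_conv_take_nth_drop)
qed

lemma one_deletion_update_tl:
  assumes "i < length R" "R ! i \<noteq> []"
  shows "one_deletion (concat R) (concat (R[i := tl (R ! i)]))"
proof -
  have "concat R = concat (take i R) @ R ! i @ concat (drop (Suc i) R)"
    using arg_cong[OF id_take_nth_drop[OF assms(1)], of concat] by simp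
  then have "length (concat (take i R)) < length (concat R)" using assms(2) by simp
  then show ?thesis unfolding one_deletion_def concat_update_tl[OF assms] by blast
qed

lemma length_one_deletion: "one_deletion x y \<Longrightarrow> length y = length x - 1"
  by (auto simp: one_deletion_def)

lemma nth_eq_if_deletions_eq:
  assumes "take p xs @ drop (Suc p) xs = take q xs @ drop (Suc q) xs" "p < q" "q < length xs"
  shows "xs ! (q - 1) = xs ! q"
proof -
  have "(take p xs @ drop (Suc p) xs) ! (q - 1) = xs ! q"
    using assms(2,3) by (auto simp: nth_append)
  moreover have "(take q xs @ drop (Suc q) xs) ! (q - 1) = xs ! (q - 1)"
    using assms(2,3) by (simp add: nth_append)
  ultimately show ?thesis using assms(1) by simp
qed

lemma length_concat_take_less:
  assumes "\<forall>r\<in>set R. r \<noteq> []" "i < j" "j \<le> length R"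
  shows "length (concat (take i R)) < length (concat (take j R))"
proof -
  have "take j R = take (Suc i) R @ take (j - Suc i) (drop (Suc i) R)"
    using assms(2) take_add[of "Suc i" "j - Suc i" R] by simp
  moreover have "take (Suc i) R = take i R @ [R ! i]"
    using assms(2,3) by (simp add: take_Suc_conv_app_nth)
  moreover have "R ! i \<noteq> []" using assms by simp
  ultimately show ?thesis by simp
qed

lemma concat_nth_run_start:
  assumes "valid_runs R" "0 < j" "j < length R"
  shows "concat R ! (length (concat (take j R)) - 1) \<noteq> concat R ! length (concat (take j R))"
proof -
  obtain k where k: "j = Suc k" using assms(2) by (cases j) auto
  have runs: "is_run (R ! k)" "is_run (R ! j)" using assms k by (auto simp: valid_runs_def)
  have prefix: "concat (take j R) = concat (take k R) @ R ! k"
    using assms(3) k by (simp add: take_Suc_conv_app_nth)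
  have x: "concat R = concat (take j R) @ R ! j @ concat (drop (Suc j) R)"
    using arg_cong[OF id_take_nth_drop[OF assms(3)], of concat] by simp
  have ne: "concat (take j R) \<noteq> []" using prefix runs(1) by (simp add: is_run_def)
  have "concat R ! (length (concat (take j R)) - 1) = last (concat (take j R))"
    using ne by (subst x) (simp add: nth_append last_conv_nth)
  also have "\<dots> = last (R ! k)" using prefix runs(1) by (simp add: is_run_def)
  also have "\<dots> = hd (R ! k)" using runs(1) last_in_set by (fastforce simp: is_run_def)
  also have "\<dots> \<noteq> hd (R ! j)"
    using successively_nth[of "(\<noteq>)" "map hd R" k] assms(1,3) k by (simp add: valid_runs_def)
  also have "hd (R ! j) = concat R ! length (concat (take j R))"
    using runs(2) by (subst x) (simp add: is_run_def nth_append hd_conv_nth)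
  finally show ?thesis .
qed

lemma inj_on_update_tl:
  assumes "valid_runs R"
  shows "inj_on (\<lambda>i. concat (R[i := tl (R ! i)])) {..<length R}"
proof -
  have nonempty: "\<forall>r\<in>set R. r \<noteq> []" using assms by (auto simp: valid_runs_def is_run_def)
  have "concat (R[i := tl (R ! i)]) \<noteq> concat (R[j := tl (R ! j)])" if "i < j" "j < length R" for i j
  proof
    let ?p = "length (concat (take i R))" and ?q = "length (concat (take j R))"
    assume "concat (R[i := tl (R ! i)]) = concat (R[j := tl (R ! j)])"
    moreover have "?p < ?q" using length_concat_take_less[OF nonempty] that by simp
    moreover have "?q < length (concat R)"
      using length_concat_take_less[OF nonempty, of j "length R"] that by simp
    ultimately have "concat R ! (?q - 1) = concat R ! ?q"
      using that nonempty by (intro nth_eq_if_deletions_eq) (simp_all add: concat_update_tl)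
    with concat_nth_run_start[OF assms _ that(2)] that(1) show False by simp
  qed
  then show ?thesis
    by (intro inj_onI) (metis lessThan_iff linorder_neqE_nat)
qed

section \<open>The weight of a deletion\<close>

definition unit_runs :: "'a list list \<Rightarrow> nat" where
  "unit_runs R = length (filter (\<lambda>r. length r = 1) R)"

definition boundary_unit_runs :: "'a list list \<Rightarrow> nat" where
  "boundary_unit_runs R = card {i. i < length R \<and> (i = 0 \<or> i = length R - 1) \<and> length (R ! i) = 1}"

definition unit_score :: "'a list list \<Rightarrow> real" where
  "unit_score R = 2 * real (unit_runs R) - real (boundary_unit_runs R)"

definition cover_weight :: "'a list \<Rightarrow> real" where
  "cover_weight y = fweight (num_runs y) (num_unit_runs y) (num_boundary_unit_runs y)"

lemma cover_weight_nonneg: "0 \<le> cover_weight y"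
  by (simp add: cover_weight_def fweight_eq_weight weight_nonneg)

lemma cover_weight_concat:
  "valid_runs R \<Longrightarrow> cover_weight (concat R) = weight (length R) (unit_score R - 2)"
  by (simp add: cover_weight_def fweight_eq_weight num_runs_def num_unit_runs_def
      num_boundary_unit_runs_def unit_runs_def boundary_unit_runs_def unit_score_def runs_concat)

lemma unit_runs_eq_card: "unit_runs R = card {i. i < length R \<and> length (R ! i) = 1}"
  unfolding unit_runs_def by (rule length_filter_conv_card)

lemma boundary_unit_runs_le_2: "boundary_unit_runs R \<le> 2"
proof -
  have "boundary_unit_runs R \<le> card {0, length R - 1}"
    unfolding boundary_unit_runs_def by (intro card_mono) auto
  also have "\<dots> \<le> 2" by (simp add: card_insert_le_m1)
  finally show ?thesis .
qed

lemma unit_score_bounds: "0 \<le> unit_score R" "unit_score R \<le> 2 * real (length R)"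
proof -
  have "boundary_unit_runs R \<le> unit_runs R"
    unfolding unit_runs_eq_card boundary_unit_runs_def by (intro card_mono) auto
  moreover have "unit_runs R \<le> length R" unfolding unit_runs_def by (rule length_filter_le)
  ultimately show "0 \<le> unit_score R" "unit_score R \<le> 2 * real (length R)"
    by (simp_all add: unit_score_def)
qed

lemma length_filter_update_le:
  assumes "i < length xs"
  shows "length (filter P (xs[i := v])) \<le> length (filter P xs) + 1"
proof -
  have "length (filter P xs) = length (filter P (take i xs @ xs ! i # drop (Suc i) xs))"
    by (simp flip: id_take_nth_drop[OF assms])
  then show ?thesis by (simp add: upd_conv_take_nth_drop[OF assms])
qed

lemma weight_le_after_unit_removal:
  assumes "unit_runs R' + 1 \<le> unit_runs R"
  shows "weight k (unit_score R) \<le> weight k (unit_score R' - 2)"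
proof -
  have "real (unit_runs R') + 1 \<le> real (unit_runs R)" using assms by linarith
  then show ?thesis
    using boundary_unit_runs_le_2[of R] by (intro weight_antimono) (simp add: unit_score_def)
qed

lemma cover_weight_delete_in_long_run:
  assumes "valid_runs R" "i < length R" "length (R ! i) \<noteq> 1"
  shows "weight (length R) (unit_score R) \<le> cover_weight (concat (R[i := tl (R ! i)]))"
proof -
  let ?R' = "R[i := tl (R ! i)]"
  have "is_run (R ! i)" using assms(1,2) by (simp add: valid_runs_def)
  then have "valid_runs ?R'"
    using assms is_run_tl by (intro valid_runs_update) auto
  moreover have "unit_runs ?R' \<le> unit_runs R + 1"
    unfolding unit_runs_def using assms(2) by (rule length_filter_update_le)
  moreover have "boundary_unit_runs R \<le> boundary_unit_runs ?R'"
    unfolding boundary_unit_runs_def using assms(2,3) by (intro card_mono) (auto simp: nth_list_update)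
  ultimately show ?thesis
    by (simp add: cover_weight_concat unit_score_def weight_antimono)
qed

lemma cover_weight_delete_first_unit_run:
  assumes "valid_runs R" "R \<noteq> []" "length (R ! 0) = 1"
  shows "weight (length R - 1) (unit_score R) \<le> cover_weight (concat (R[0 := tl (R ! 0)]))"
proof -
  obtain r R' where R: "R = r # R'" using assms(2) by (cases R) auto
  have "valid_runs R'" using valid_runs_drop[OF assms(1), of 1] R by simp
  moreover have "unit_runs R' + 1 \<le> unit_runs R" using assms(3) R by (simp add: unit_runs_def)
  moreover have "concat (R[0 := tl (R ! 0)]) = concat R'" using assms(3) R by (cases r) auto
  ultimately show ?thesis using R by (simp add: cover_weight_concat weight_le_after_unit_removal)
qed

lemma cover_weight_delete_last_unit_run:
  assumes "valid_runs R" "Suc i = length R" "length (R ! i) = 1"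
  shows "weight (length R - 1) (unit_score R) \<le> cover_weight (concat (R[i := tl (R ! i)]))"
proof -
  have R: "R = take i R @ [R ! i]"
    using assms(2) by (metis lessI take_Suc_conv_app_nth take_all_iff order_refl)
  have "valid_runs (take i R)" using valid_runs_take[OF assms(1)] .
  moreover have "unit_runs (take i R) + 1 \<le> unit_runs R"
    using assms(3) arg_cong[OF R, of unit_runs] by (simp add: unit_runs_def)
  moreover have "concat (R[i := tl (R ! i)]) = concat (take i R)"
    using assms(2,3) by (subst R) (cases "R ! i"; simp add: list_update_append)
  ultimately show ?thesis by (simp add: cover_weight_concat weight_le_after_unit_removal flip: assms(2))
qed

lemma cover_weight_delete_inner_unit_run:
  fixes R :: "bool list list"
  assumes valid: "valid_runs R" and k: "Suc (Suc k) < length R" and unit: "length (R ! Suc k) = 1"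
  shows "weight (length R - 2) (unit_score R) \<le> cover_weight (concat (R[Suc k := tl (R ! Suc k)]))"
proof -
  let ?a = "R ! k" and ?b = "R ! Suc (Suc k)" and ?D = "drop (Suc (Suc (Suc k))) R"
  define R' where "R' = take k R @ (?a @ ?b) # ?D"
  have R: "R = take k R @ ?a # R ! Suc k # ?b # ?D"
    using k by (metis Cons_nth_drop_Suc Suc_lessD append_take_drop_id)
  have runs: "is_run ?a" "is_run ?b" using valid k by (auto simp: valid_runs_def)
  have "successively (\<noteq>) (map hd R)" using valid by (simp add: valid_runs_def)
  then have alternating:
      "successively (\<noteq>) (map hd (take k R) @ hd ?a # hd (R ! Suc k) # hd ?b # map hd ?D)"
    by (subst (asm) R) simp
  \<comment> \<open>over a binary alphabet the two neighbours of a run carry the same symbol\<close>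
  then have "hd ?a = hd ?b" by (auto simp: successively_append_iff)
  have "successively (\<noteq>) (map hd R')"
    using successively_neq_drop_two[of "map hd (take k R) @ [hd ?a]"] alternating runs
    by (simp add: R'_def is_run_def)
  moreover have "\<forall>r\<in>set R'. is_run r"
    using valid runs \<open>hd ?a = hd ?b\<close> is_run_append
    by (auto simp: R'_def valid_runs_def dest: in_set_takeD in_set_dropD)
  ultimately have "valid_runs R'" by (simp add: valid_runs_def)
  moreover have "unit_runs R' + 1 \<le> unit_runs R"
    using arg_cong[OF R, of unit_runs] unit runs by (simp add: R'_def unit_runs_def is_run_def)
  moreover have "concat (R[Suc k := tl (R ! Suc k)]) = concat R'"
  proof -
    have "take (Suc k) R = take k R @ [?a]" using k by (simp add: take_Suc_conv_app_nth)
    moreover have "drop (Suc (Suc k)) R = ?b # ?D" using k by (simp add: Cons_nth_drop_Suc)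
    moreover have "tl (R ! Suc k) = []" using unit by (cases "R ! Suc k") auto
    ultimately show ?thesis using k by (simp add: upd_conv_take_nth_drop R'_def)
  qed
  moreover have "length R' = length R - 2" using k by (simp add: R'_def)
  ultimately show ?thesis by (simp add: cover_weight_concat weight_le_after_unit_removal)
qed

definition deletion_credit :: "'a list list \<Rightarrow> nat \<Rightarrow> real" where
  "deletion_credit R i = 2 * of_bool (length (R ! i) = 1)
     - of_bool ((i = 0 \<or> i = length R - 1) \<and> length (R ! i) = 1)"

lemma sum_deletion_credit: "(\<Sum>i<length R. deletion_credit R i) = unit_score R"
proof -
  have "{..<length R} \<inter> {i. P i} = {i. i < length R \<and> P i}" for P by auto
  then show ?thesis
    by (simp add: deletion_credit_def unit_score_def unit_runs_eq_card boundary_unit_runs_def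
        sum_subtractf flip: sum_distrib_left)
qed

lemma unit_run_imp_two_runs:
  assumes "2 \<le> length (concat R)" "i < length R" "length (R ! i) = 1"
  shows "2 \<le> length R"
proof (rule ccontr)
  assume "\<not> 2 \<le> length R"
  with assms(2) have "length R = 1" by simp
  then obtain a where "R = [a]" by (auto simp: length_Suc_conv)
  with assms show False by simp
qed

lemma cover_weight_delete_ge:
  fixes R :: "bool list list"
  assumes valid: "valid_runs R" and long: "2 \<le> length (concat R)" and i: "i < length R"
  defines "r \<equiv> length R" and "c \<equiv> unit_score R"
  shows "weight r c + deletion_credit R i / ((real r + 2) * (real r + 1) + c)
           \<le> cover_weight (concat (R[i := tl (R ! i)]))"
proof -
  have c: "0 \<le> c" "c \<le> 2 * real r" using unit_score_bounds by (simp_all add: c_def r_def)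
  consider (long_run) "length (R ! i) \<noteq> 1"
    | (first) "length (R ! i) = 1" "i = 0"
    | (last) "length (R ! i) = 1" "i \<noteq> 0" "Suc i = r"
    | (inner) k where "length (R ! i) = 1" "i = Suc k" "Suc (Suc k) < r"
    using i unfolding r_def by (metis Suc_lessI not0_implies_Suc)
  then show ?thesis
  proof cases
    case long_run
    then show ?thesis
      using cover_weight_delete_in_long_run[OF valid i] by (simp add: deletion_credit_def r_def c_def)
  next
    case first
    then have "2 \<le> r" using unit_run_imp_two_runs[OF long i] by (simp add: r_def)
    with first c show ?thesis
      using weight_le_weight_pred[of r c] cover_weight_delete_first_unit_run[OF valid]
      by (fastforce simp: deletion_credit_def r_def c_def)
  next
    case last
    then have "2 \<le> r" using unit_run_imp_two_runs[OF long i] by (simp add: r_def)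
    with last c show ?thesis
      using weight_le_weight_pred[of r c] cover_weight_delete_last_unit_run[OF valid, of i]
      by (fastforce simp: deletion_credit_def r_def c_def)
  next
    case inner
    with c show ?thesis
      using weight_le_weight_pred2[of r c] cover_weight_delete_inner_unit_run[OF valid, of k]
      by (fastforce simp: deletion_credit_def r_def c_def)
  qed
qed

lemma cover_weight_deletions_ge_1:
  fixes x :: "bool list"
  assumes "2 \<le> length x"
  shows "1 \<le> (\<Sum>i<length (runs x). cover_weight (concat ((runs x)[i := tl (runs x ! i)])))"
proof -
  define R where "R = runs x"
  define r where "r = length R"
  define c where "c = unit_score R"
  have valid: "valid_runs R" and x: "concat R = x" using runs_correct by (auto simp: R_def)
  have "0 < r" using assms x by (cases R) (auto simp: r_def)
  have c: "0 \<le> c" using unit_score_bounds by (simp add: c_def)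
  have "1 = real r * weight r c + c / ((real r + 2) * (real r + 1) + c)"
    using weight_complement[OF \<open>0 < r\<close> c] by simp
  also have "\<dots> = (\<Sum>i<r. weight r c + deletion_credit R i / ((real r + 2) * (real r + 1) + c))"
    by (simp add: sum.distrib sum_divide_distrib[symmetric] sum_deletion_credit r_def c_def)
  also have "\<dots> \<le> (\<Sum>i<r. cover_weight (concat (R[i := tl (R ! i)])))"
    using cover_weight_delete_ge[OF valid] assms x by (intro sum_mono) (simp add: r_def c_def)
  finally show ?thesis by (simp add: R_def r_def)
qed

lemma finite_bin_strings: "finite (bin_strings m)"
  using finite_lists_length_eq[of "UNIV :: bool set" m] by (simp add: bin_strings_def)

lemma del_channel_covered:
  fixes x :: "bool list"
  assumes "2 \<le> length x"
  shows "1 \<le> (\<Sum>y\<in>bin_strings (length x - 1). del_channel x y * cover_weight y)"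
proof -
  define R where "R = runs x"
  define del where "del i = concat (R[i := tl (R ! i)])" for i
  have valid: "valid_runs R" and x: "concat R = x" using runs_correct by (auto simp: R_def)
  have deletion: "one_deletion x (del i)" if "i < length R" for i
    using one_deletion_update_tl[OF that] valid that x
    by (auto simp: del_def valid_runs_def is_run_def)
  have "1 \<le> (\<Sum>i<length R. cover_weight (del i))"
    using cover_weight_deletions_ge_1[OF assms] by (simp add: R_def del_def)
  also have "\<dots> = (\<Sum>y\<in>del ` {..<length R}. del_channel x y * cover_weight y)"
    using inj_on_update_tl[OF valid] deletion
    by (simp add: sum.reindex del_def[abs_def] del_channel_def)
  also have "\<dots> \<le> (\<Sum>y\<in>bin_strings (length x - 1). del_channel x y * cover_weight y)"
    using deletion length_one_deletion
    by (intro sum_mono2 finite_bin_strings)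
       (auto simp: bin_strings_def del_channel_def cover_weight_nonneg)
  finally show ?thesis .
qed

theorem theorem1:
  fixes n :: nat
  assumes "n \<ge> 2"
  defines "z \<equiv> (\<lambda>y::bool list. fweight (num_runs y) (num_unit_runs y) (num_boundary_unit_runs y))"
  shows "frac_cover_feasible (bin_strings n) (bin_strings (n - 1)) del_channel z
         \<and> kappa_star (bin_strings n) (bin_strings (n - 1)) del_channel \<le> (\<Sum>y\<in>bin_strings (n - 1). z y)"
proof
  have "z = cover_weight" by (simp add: z_def cover_weight_def[abs_def])
  then show feasible: "frac_cover_feasible (bin_strings n) (bin_strings (n - 1)) del_channel z"
    using del_channel_covered assms(1)
    by (auto simp: frac_cover_feasible_def bin_strings_def cover_weight_nonneg)
  have "bdd_below {\<Sum>y\<in>bin_strings (n - 1). z' y | z'.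
                     frac_cover_feasible (bin_strings n) (bin_strings (n - 1)) del_channel z'}"
    by (rule bdd_belowI[of _ 0]) (auto simp: frac_cover_feasible_def intro!: sum_nonneg)
  with feasible
  show "kappa_star (bin_strings n) (bin_strings (n - 1)) del_channel \<le> (\<Sum>y\<in>bin_strings (n - 1). z y)"
    unfolding kappa_star_def by (intro cInf_lower) auto
qed

end
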